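(* There exist knots $K$ such that: $\det(K)$ has no divisor congruent to $3\bmod 4$; the Alexander polynomial has the form $\Delta_K(t)=f(t)f(1/t)$ for some $f\in\mathbb{Z}[t]$; all Tristram–Levine signatures of $K$ vanish; $|\Lambda_0(K)|>\sqrt{\det(K)}$; and the linking form of $K$ has no metabolizer.
   Context: For a knot $K\subset S^3$, $D_K$ is the double branched cover of $S^3$ over $K$; $H_1(D_K;\mathbb{Z})$ is finite of odd order $\det(K)=|\Delta_K(-1)|$. The linking form $\lambda:H_1(D_K)\times H_1(D_K)\to\mathbb{Q}/\mathbb{Z}$ is the standard symmetric non-degenerate linking pairing. The isotropic cone is $\Lambda_0(K)=\{g\in H_1(D_K):\lambda(g,g)=0\}$. A metabolizer is a subgroup $M\subset H_1(D_K)$ of order $\sqrt{\det(K)}$ with $M=M^\perp=\{g:\lambda(g,h)=0\ \forall h\in M\}$. For a Seifert matrix $V$ of $K$ and $\xi\in\mathbb{C}$ with $|\xi|=1$, the Tristram–Levine signature $\sigma_\xi(K)$ is the signature of the Hermitian matrix $(1-\xi)V+(1-\bar\xi)V^T$. *)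

theory Defs
  imports "Jordan_Normal_Form.Char_Poly" "HOL-Algebra.Group" "HOL-Computational_Algebra.Polynomial"
begin

text \<open>Knots are modelled by their Seifert matrices: an integer square matrix V with
  det(V - V^T) = 1.  (Every such matrix is the Seifert matrix of some knot in S^3.)\<close>

definition seifert_matrix :: "int mat \<Rightarrow> bool" where
  "seifert_matrix V \<longleftrightarrow> V \<in> carrier_mat (dim_row V) (dim_row V) \<and>
     det (V - transpose_mat V) = 1"

text \<open>Symmetrised matrix V + V^T: presentation matrix of H_1(D_K).\<close>
definition sym_mat :: "int mat \<Rightarrow> int mat" where
  "sym_mat V = V + transpose_mat V"

text \<open>det(K) = |Delta_K(-1)| = |det(V + V^T)|.\<close>
definition knot_det :: "int mat \<Rightarrow> nat" where
  "knot_det V = nat \<bar>det (sym_mat V)\<bar>"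

text \<open>Alexander polynomial Delta_K(t) = det(V - t V^T), well defined up to units +-t^k.\<close>
definition alexander_poly :: "int mat \<Rightarrow> int poly" where
  "alexander_poly V = det (map_mat (\<lambda>a. [:a:]) V - map_mat (\<lambda>a. [:0, a:]) (transpose_mat V))"

text \<open>Delta_K(t) = f(t) f(1/t) up to units: monom e a * Delta = monom 1 b * f * reflect_poly f,
  where reflect_poly f (t) = t^(deg f) f(1/t).\<close>
definition alexander_is_norm :: "int mat \<Rightarrow> bool" where
  "alexander_is_norm V \<longleftrightarrow> (\<exists>f :: int poly. \<exists>e :: int. \<exists>a b :: nat. e \<in> {1, -1} \<and>
     monom e a * alexander_poly V = monom 1 b * f * reflect_poly f)"

definition signature :: "complex mat \<Rightarrow> int" where
  "signature B =
     int (\<Sum>x\<in>{x::real. x > 0 \<and> poly (char_poly B) (complex_of_real x) = 0}.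
            order (complex_of_real x) (char_poly B))
   - int (\<Sum>x\<in>{x::real. x < 0 \<and> poly (char_poly B) (complex_of_real x) = 0}.
            order (complex_of_real x) (char_poly B))"

definition tl_signature :: "int mat \<Rightarrow> complex \<Rightarrow> int" where
  "tl_signature V \<xi> = signature
     ((1 - \<xi>) \<cdot>\<^sub>m map_mat of_int V + (1 - cnj \<xi>) \<cdot>\<^sub>m map_mat of_int (transpose_mat V))"

text \<open>H_1(D_K) = Z^n / (V + V^T) Z^n, as a group of cosets.\<close>
definition hrel :: "int mat \<Rightarrow> (int vec \<times> int vec) set" where
  "hrel V = {(x, y). x \<in> carrier_vec (dim_row V) \<and> y \<in> carrier_vec (dim_row V) \<and>
     (\<exists>z \<in> carrier_vec (dim_row V). x - y = sym_mat V *\<^sub>v z)}"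

definition H1 :: "int mat \<Rightarrow> int vec set monoid" where
  "H1 V = \<lparr> carrier = carrier_vec (dim_row V) // hrel V,
            mult = (\<lambda>X Y. {x + y | x y. x \<in> X \<and> y \<in> Y}),
            one = hrel V `` {0\<^sub>v (dim_row V)} \<rparr>"

text \<open>Linking form lambda([x],[y]) = x^T (V+V^T)^{-1} y mod Z, with the inverse written as
  adj / det, valued in [0,1) (representing Q/Z).\<close>
definition lk_rep :: "int mat \<Rightarrow> int vec \<Rightarrow> int vec \<Rightarrow> rat" where
  "lk_rep V x y = frac (of_int (scalar_prod x (adj_mat (sym_mat V) *\<^sub>v y)) / of_int (det (sym_mat V)))"

definition linking_form :: "int mat \<Rightarrow> int vec set \<Rightarrow> int vec set \<Rightarrow> rat" where
  "linking_form V X Y = lk_rep V (SOME x. x \<in> X) (SOME y. y \<in> Y)"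

definition isotropic_cone :: "int mat \<Rightarrow> int vec set set" where
  "isotropic_cone V = {g \<in> carrier (H1 V). linking_form V g g = 0}"

definition metabolizer :: "int mat \<Rightarrow> int vec set set \<Rightarrow> bool" where
  "metabolizer V M \<longleftrightarrow> subgroup M (H1 V) \<and> real (card M) = sqrt (real (knot_det V)) \<and>
     M = {g \<in> carrier (H1 V). \<forall>h \<in> M. linking_form V g h = 0}"

end

theory Submission
  imports Defs "HOL-Number_Theory.Cong" "HOL-Library.Product_Plus"
begin

text \<open>
  The knot K is the connected sum of three genus-one knots with Seifert matrix [[16, 1], [0, -1]]
  and one with Seifert matrix [[8, 1], [0, -2]]. Each summand has determinant 65, Alexander
  polynomial f = -16 t^2 + 33 t - 16 = t^2 f(1/t), and a Seifert matrix [[a, 1], [0, c]] with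
  a c < 0, which forces its Tristram-Levine signatures to vanish. Hence det K = 65^4 = 5^4 13^4
  has only divisors congruent to 1 mod 4, and Delta_K = f^4 is f^2 times its own reflection.

  In suitable coordinates H_1(D_K) = (Z/65)^4 with self-linking 2 q / 65, where
  q = a^2 + b^2 + c^2 + 2 d^2. Modulo 5 and modulo 13, -1 is a square and -2 is not, so q is a
  hyperbolic plane plus an anisotropic plane; a totally isotropic subgroup therefore has order at
  most 5 * 13 = 65, far below the order 65^2 of a metabolizer. An explicit family of 2 * 65^2
  isotropic classes shows that the isotropic cone is nevertheless larger than sqrt (det K).
\<close>

section \<open>Matrices with 2 x 2 diagonal blocks\<close>

lemma det_mat_2x2:
  fixes f :: "nat \<Rightarrow> nat \<Rightarrow> 'a :: comm_ring_1"
  shows "det (mat 2 2 (\<lambda>(i, j). f i j)) = f 0 0 * f 1 1 - f 0 1 * f 1 0"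
proof -
  let ?A = "mat 2 2 (\<lambda>(i, j). f i j)"
  have A: "?A \<in> carrier_mat 2 2" by simp
  have "det ?A = (\<Sum>i<2. ?A $$ (i, 0) * cofactor ?A i 0)"
    by (rule laplace_expansion_column[OF A]) simp
  also have "\<dots> = ?A $$ (0, 0) * cofactor ?A 0 0 + ?A $$ (1, 0) * cofactor ?A 1 0"
    by (simp add: numeral_2_eq_2)
  also have "cofactor ?A 0 0 = f 1 1"
    unfolding cofactor_def by (subst det_single) (auto simp: mat_delete_def insert_index_def)
  also have "cofactor ?A 1 0 = - f 0 1"
    unfolding cofactor_def by (subst det_single) (auto simp: mat_delete_def insert_index_def)
  finally show ?thesis by (simp add: algebra_simps)
qed

definition block_diag2 :: "(nat \<Rightarrow> nat \<Rightarrow> nat \<Rightarrow> 'a :: zero) \<Rightarrow> nat \<Rightarrow> nat \<Rightarrow> 'a" where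
  "block_diag2 B i j = (if i div 2 = j div 2 then B (i div 2) (i mod 2) (j mod 2) else 0)"

lemma block_diag2_shift: "block_diag2 B (i + 2) (j + 2) = block_diag2 (\<lambda>k. B (Suc k)) i j"
  by (simp add: block_diag2_def)

lemma mat_block_diag2_split:
  "mat (2 + m) (2 + m) (\<lambda>(i, j). block_diag2 B i j) =
    four_block_mat (mat 2 2 (\<lambda>(i, j). B 0 i j)) (0\<^sub>m 2 m) (0\<^sub>m m 2)
      (mat m m (\<lambda>(i, j). block_diag2 (\<lambda>k. B (Suc k)) i j))"
proof (rule eq_matI)
  fix i j assume "i < dim_row (four_block_mat (mat 2 2 (\<lambda>(i, j). B 0 i j)) (0\<^sub>m 2 m) (0\<^sub>m m 2)
      (mat m m (\<lambda>(i, j). block_diag2 (\<lambda>k. B (Suc k)) i j)))"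
    "j < dim_col (four_block_mat (mat 2 2 (\<lambda>(i, j). B 0 i j)) (0\<^sub>m 2 m) (0\<^sub>m m 2)
      (mat m m (\<lambda>(i, j). block_diag2 (\<lambda>k. B (Suc k)) i j)))"
  then have "i < 2 + m" "j < 2 + m" by simp_all
  moreover have "block_diag2 B i j = block_diag2 (\<lambda>k. B (Suc k)) (i - 2) (j - 2)"
    if "\<not> i < 2" "\<not> j < 2"
  proof -
    have "Suc (Suc (i - 2)) = i" "Suc (Suc (j - 2)) = j" using that by arith+
    then show ?thesis using block_diag2_shift[of B "i - 2" "j - 2"] by simp
  qed
  ultimately show "mat (2 + m) (2 + m) (\<lambda>(i, j). block_diag2 B i j) $$ (i, j) =
    four_block_mat (mat 2 2 (\<lambda>(i, j). B 0 i j)) (0\<^sub>m 2 m) (0\<^sub>m m 2)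
      (mat m m (\<lambda>(i, j). block_diag2 (\<lambda>k. B (Suc k)) i j)) $$ (i, j)"
    by (auto simp: four_block_mat_def block_diag2_def)
qed auto

lemma det_block_diag2:
  fixes B :: "nat \<Rightarrow> nat \<Rightarrow> nat \<Rightarrow> 'a :: idom"
  shows "det (mat (2 * n) (2 * n) (\<lambda>(i, j). block_diag2 B i j)) =
    (\<Prod>k<n. B k 0 0 * B k 1 1 - B k 0 1 * B k 1 0)"
proof (induction n arbitrary: B)
  case 0
  then show ?case by (simp add: det_def)
next
  case (Suc n)
  have "det (mat (2 * Suc n) (2 * Suc n) (\<lambda>(i, j). block_diag2 B i j)) =
      det (mat 2 2 (\<lambda>(i, j). B 0 i j)) *
      det (mat (2 * n) (2 * n) (\<lambda>(i, j). block_diag2 (\<lambda>k. B (Suc k)) i j))"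
    unfolding mult_Suc_right mat_block_diag2_split
    by (rule det_four_block_mat_upper_right_zero) auto
  also have "\<dots> = (\<Prod>k<Suc n. B k 0 0 * B k 1 1 - B k 0 1 * B k 1 0)"
    unfolding det_mat_2x2 Suc.IH prod.lessThan_Suc_shift ..
  finally show ?case .
qed

lemma char_poly_block_diag2:
  fixes B :: "nat \<Rightarrow> nat \<Rightarrow> nat \<Rightarrow> 'a :: idom"
  shows "char_poly (mat (2 * n) (2 * n) (\<lambda>(i, j). block_diag2 B i j)) =
    (\<Prod>k<n. [:B k 0 0 * B k 1 1 - B k 0 1 * B k 1 0, - (B k 0 0 + B k 1 1), 1:])"
proof -
  define C where "C k i j = (if i = j then [:0, 1:] else 0) + [:- B k i j:]" for k i j
  have cpm: "char_poly_matrix (mat (2 * n) (2 * n) (\<lambda>(i, j). block_diag2 B i j)) =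
      mat (2 * n) (2 * n) (\<lambda>(i, j). block_diag2 C i j)"
  proof (rule eq_matI)
    fix i j assume "i < dim_row (mat (2 * n) (2 * n) (\<lambda>(i, j). block_diag2 C i j))"
      "j < dim_col (mat (2 * n) (2 * n) (\<lambda>(i, j). block_diag2 C i j))"
    moreover have "i = j \<longleftrightarrow> i div 2 = j div 2 \<and> i mod 2 = j mod 2"
      by (metis div_mult_mod_eq)
    ultimately show "char_poly_matrix (mat (2 * n) (2 * n) (\<lambda>(i, j). block_diag2 B i j)) $$ (i, j) =
        mat (2 * n) (2 * n) (\<lambda>(i, j). block_diag2 C i j) $$ (i, j)"
      unfolding char_poly_matrix_def by (auto simp: C_def block_diag2_def)
  qed (simp_all add: char_poly_matrix_def)
  show ?thesis
    unfolding char_poly_def cpm det_block_diag2 by (simp add: C_def algebra_simps)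
qed

section \<open>Signatures of matrices with real spectrum\<close>

definition poly_of_real_roots :: "real list \<Rightarrow> complex poly" where
  "poly_of_real_roots cs = (\<Prod>c\<leftarrow>cs. [:- complex_of_real c, 1:])"

lemma poly_of_real_roots_append:
  "poly_of_real_roots (xs @ ys) = poly_of_real_roots xs * poly_of_real_roots ys"
  unfolding poly_of_real_roots_def by simp

lemma poly_of_real_roots_nonzero: "poly_of_real_roots cs \<noteq> 0"
proof -
  have "0 \<notin> set (map (\<lambda>c. [:- complex_of_real c, 1:]) cs)" by auto
  then show ?thesis unfolding poly_of_real_roots_def by (subst prod_list_zero_iff) blast
qed

lemma poly_of_real_roots_eq_0_iff:
  "poly (poly_of_real_roots cs) (complex_of_real x) = 0 \<longleftrightarrow> x \<in> set cs"
  unfolding poly_of_real_roots_def by (induction cs) auto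

lemma order_poly_of_real_roots:
  "order (complex_of_real x) (poly_of_real_roots cs) = count_list cs x"
proof (induction cs)
  case Nil
  then show ?case unfolding poly_of_real_roots_def by simp
next
  case (Cons c cs)
  have "poly_of_real_roots (c # cs) = [:- complex_of_real c, 1:] * poly_of_real_roots cs"
    unfolding poly_of_real_roots_def by simp
  moreover have "order (complex_of_real x) [:- complex_of_real c, 1:] = (if x = c then 1 else 0)"
    using order_power_n_n[of "complex_of_real c" 1] by (auto intro: order_0I)
  ultimately show ?case
    using Cons order_mult[of "[:- complex_of_real c, 1:]" "poly_of_real_roots cs"]
      poly_of_real_roots_nonzero[of "c # cs"] by simp
qed

lemma sum_count_list_filter:
  "(\<Sum>x\<in>{x. P x \<and> x \<in> set cs}. count_list cs x) = length (filter P cs)"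
proof -
  have "(\<Sum>x\<in>{x. P x \<and> x \<in> set cs}. count_list cs x) =
      (\<Sum>x\<in>set (filter P cs). count_list (filter P cs) x)"
  proof (rule sum.cong)
    fix x assume "x \<in> set (filter P cs)"
    then have "P x" by simp
    then show "count_list cs x = count_list (filter P cs) x" by (induction cs) auto
  qed auto
  also have "\<dots> = length (filter P cs)" by (rule sum_count_set) simp_all
  finally show ?thesis .
qed

lemma signature_eq_count_roots:
  assumes "char_poly B = poly_of_real_roots cs"
  shows "signature B = int (length (filter (\<lambda>c. c > 0) cs)) - int (length (filter (\<lambda>c. c < 0) cs))"
proof -
  have "{x. x > 0 \<and> poly (poly_of_real_roots cs) (complex_of_real x) = 0} = {x. x > 0 \<and> x \<in> set cs}"
    "{x. x < 0 \<and> poly (poly_of_real_roots cs) (complex_of_real x) = 0} = {x. x < 0 \<and> x \<in> set cs}"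
    unfolding poly_of_real_roots_eq_0_iff by simp_all
  then show ?thesis
    unfolding signature_def assms order_poly_of_real_roots by (simp only: sum_count_list_filter)
qed

lemma monic_quadratic_eq_poly_of_real_roots:
  fixes d t :: real
  assumes "d \<le> 0"
  defines "s \<equiv> sqrt (t^2 - 4 * d)"
  shows "[:complex_of_real d, - complex_of_real t, 1:] = poly_of_real_roots [(t + s) / 2, (t - s) / 2]"
proof -
  have "0 \<le> t^2 - 4 * d" using assms(1) zero_le_power2[of t] by linarith
  then have "s^2 = t^2 - 4 * d" unfolding s_def by simp
  then have prod: "(t + s) / 2 * ((t - s) / 2) = d" by (simp add: field_simps power2_eq_square)
  have sum: "(t + s) / 2 + (t - s) / 2 = t" by (simp add: field_simps)
  have "poly_of_real_roots [(t + s) / 2, (t - s) / 2] =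
      [:- complex_of_real ((t + s) / 2), 1:] * [:- complex_of_real ((t - s) / 2), 1:]"
    unfolding poly_of_real_roots_def by simp
  also have "\<dots> = [:complex_of_real ((t + s) / 2 * ((t - s) / 2)),
      - complex_of_real ((t + s) / 2 + (t - s) / 2), 1:]"
    by (simp add: algebra_simps)
  finally show ?thesis unfolding prod sum by simp
qed

lemma quadratics_eq_poly_of_balanced_real_roots:
  fixes d t :: "nat \<Rightarrow> real"
  assumes "\<And>k. k < n \<Longrightarrow> d k < 0 \<or> d k = 0 \<and> t k = 0"
  shows "\<exists>cs. (\<Prod>k<n. [:complex_of_real (d k), - complex_of_real (t k), 1:]) = poly_of_real_roots cs
      \<and> length (filter (\<lambda>c. c > 0) cs) = length (filter (\<lambda>c. c < 0) cs)"
  using assms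
proof (induction n)
  case 0
  then show ?case by (intro exI[of _ "[]"]) (simp add: poly_of_real_roots_def)
next
  case (Suc n)
  then obtain cs where cs:
    "(\<Prod>k<n. [:complex_of_real (d k), - complex_of_real (t k), 1:]) = poly_of_real_roots cs"
    "length (filter (\<lambda>c. c > 0) cs) = length (filter (\<lambda>c. c < 0) cs)" by auto
  define s where "s = sqrt ((t n)^2 - 4 * d n)"
  have dn: "d n < 0 \<or> d n = 0 \<and> t n = 0" using Suc.prems by simp
  then have quad: "[:complex_of_real (d n), - complex_of_real (t n), 1:] =
      poly_of_real_roots [(t n + s) / 2, (t n - s) / 2]"
    unfolding s_def by (intro monic_quadratic_eq_poly_of_real_roots) auto
  have "\<bar>t n\<bar> < s" if "d n < 0"
    using real_sqrt_less_mono[of "(t n)^2" "(t n)^2 - 4 * d n"] that unfolding s_def by simp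
  then have "length (filter (\<lambda>c. c > 0) [(t n + s) / 2, (t n - s) / 2]) =
      length (filter (\<lambda>c. c < 0) [(t n + s) / 2, (t n - s) / 2])"
    using dn unfolding s_def by auto
  then show ?case
    using cs quad by (intro exI[of _ "cs @ [(t n + s) / 2, (t n - s) / 2]"])
      (simp add: poly_of_real_roots_append)
qed

lemma signature_eq_0_if_char_poly_quadratics:
  fixes d t :: "nat \<Rightarrow> real"
  assumes "char_poly B = (\<Prod>k<n. [:complex_of_real (d k), - complex_of_real (t k), 1:])"
    and "\<And>k. k < n \<Longrightarrow> d k < 0 \<or> d k = 0 \<and> t k = 0"
  shows "signature B = 0"
proof -
  obtain cs where "char_poly B = poly_of_real_roots cs"
    and "length (filter (\<lambda>c. c > 0) cs) = length (filter (\<lambda>c. c < 0) cs)"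
    using quadratics_eq_poly_of_balanced_real_roots[of n d t] assms by auto
  then show ?thesis using signature_eq_count_roots by simp
qed

section \<open>Block sums of genus-one Seifert matrices\<close>

definition seifert_block :: "int \<Rightarrow> int \<Rightarrow> nat \<Rightarrow> nat \<Rightarrow> int" where
  "seifert_block a c i j = (if i = 0 then (if j = 0 then a else 1) else (if j = 0 then 0 else c))"

definition genus_one_sum :: "nat \<Rightarrow> (nat \<Rightarrow> int) \<Rightarrow> (nat \<Rightarrow> int) \<Rightarrow> int mat" where
  "genus_one_sum n a c =
     mat (2 * n) (2 * n) (\<lambda>(i, j). block_diag2 (\<lambda>k. seifert_block (a k) (c k)) i j)"

lemma genus_one_sum_carrier: "genus_one_sum n a c \<in> carrier_mat (2 * n) (2 * n)"
  by (simp add: genus_one_sum_def)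

lemma seifert_matrix_genus_one_sum: "seifert_matrix (genus_one_sum n a c)"
proof -
  have "genus_one_sum n a c - transpose_mat (genus_one_sum n a c) =
      mat (2 * n) (2 * n) (\<lambda>(i, j). block_diag2 (\<lambda>k i j.
        seifert_block (a k) (c k) i j - seifert_block (a k) (c k) j i) i j)"
    unfolding genus_one_sum_def by (intro eq_matI) (auto simp: block_diag2_def)
  moreover have "dim_row (genus_one_sum n a c) = 2 * n"
    using genus_one_sum_carrier by blast
  ultimately show ?thesis
    using genus_one_sum_carrier unfolding seifert_matrix_def
    by (simp add: det_block_diag2 seifert_block_def)
qed

lemma sym_mat_genus_one_sum:
  "sym_mat (genus_one_sum n a c) =
    mat (2 * n) (2 * n) (\<lambda>(i, j). block_diag2 (\<lambda>k i j.
      seifert_block (a k) (c k) i j + seifert_block (a k) (c k) j i) i j)"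
  unfolding sym_mat_def genus_one_sum_def by (intro eq_matI) (auto simp: block_diag2_def)

lemma det_sym_genus_one_sum:
  "det (sym_mat (genus_one_sum n a c)) = (\<Prod>k<n. 4 * a k * c k - 1)"
  by (simp add: sym_mat_genus_one_sum det_block_diag2 seifert_block_def mult.assoc)

lemma alexander_poly_genus_one_sum:
  "alexander_poly (genus_one_sum n a c) = (\<Prod>k<n. [:a k * c k, 1 - 2 * a k * c k, a k * c k:])"
proof -
  have alex: "map_mat (\<lambda>x. [:x:]) (genus_one_sum n a c)
      - map_mat (\<lambda>x. [:0, x:]) (transpose_mat (genus_one_sum n a c)) =
      mat (2 * n) (2 * n) (\<lambda>(i, j). block_diag2 (\<lambda>k i j.
        [:seifert_block (a k) (c k) i j:] - [:0, seifert_block (a k) (c k) j i:]) i j)"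
    unfolding genus_one_sum_def by (intro eq_matI) (auto simp: block_diag2_def)
  show ?thesis
    unfolding alexander_poly_def alex det_block_diag2 by (simp add: seifert_block_def algebra_simps)
qed

lemma cmod_1_tl_coeffs:
  assumes "cmod \<xi> = 1"
  shows "(1 - \<xi>) + (1 - cnj \<xi>) = complex_of_real (2 * (1 - Re \<xi>))"
    "(1 - \<xi>) * (1 - cnj \<xi>) = complex_of_real (2 * (1 - Re \<xi>))"
proof -
  show "(1 - \<xi>) + (1 - cnj \<xi>) = complex_of_real (2 * (1 - Re \<xi>))"
    by (simp add: complex_eq_iff)
  have "\<xi> * cnj \<xi> = 1" using complex_norm_square[of \<xi>] assms by simp
  then show "(1 - \<xi>) * (1 - cnj \<xi>) = complex_of_real (2 * (1 - Re \<xi>))"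
    by (simp add: complex_eq_iff algebra_simps)
qed

lemma tl_signature_genus_one_sum:
  assumes ac: "\<And>k. k < n \<Longrightarrow> a k * c k \<le> 0" and \<xi>: "cmod \<xi> = 1"
  shows "tl_signature (genus_one_sum n a c) \<xi> = 0"
proof -
  define r where "r = 1 - Re \<xi>"
  define d where "d k = (2 * r * of_int (a k)) * (2 * r * of_int (c k)) - 2 * r" for k
  define t where "t k = 2 * r * of_int (a k) + 2 * r * of_int (c k)" for k
  define B where "B k i j = (1 - \<xi>) * of_int (seifert_block (a k) (c k) i j)
      + (1 - cnj \<xi>) * of_int (seifert_block (a k) (c k) j i)" for k i j
  have r: "r \<ge> 0" unfolding r_def using complex_Re_le_cmod[of \<xi>] \<xi> by simp
  have tl_mat: "(1 - \<xi>) \<cdot>\<^sub>m map_mat of_int (genus_one_sum n a c) +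
      (1 - cnj \<xi>) \<cdot>\<^sub>m map_mat of_int (transpose_mat (genus_one_sum n a c)) =
      mat (2 * n) (2 * n) (\<lambda>(i, j). block_diag2 B i j)"
    unfolding genus_one_sum_def B_def by (intro eq_matI) (auto simp: block_diag2_def)
  have quad: "[:B k 0 0 * B k 1 1 - B k 0 1 * B k 1 0, - (B k 0 0 + B k 1 1), 1:] =
      [:complex_of_real (d k), - complex_of_real (t k), 1:]" for k
  proof -
    note coeffs = cmod_1_tl_coeffs[OF \<xi>, folded r_def]
    have "B k 0 0 = ((1 - \<xi>) + (1 - cnj \<xi>)) * of_int (a k)"
      "B k 1 1 = ((1 - \<xi>) + (1 - cnj \<xi>)) * of_int (c k)"
      "B k 0 1 * B k 1 0 = (1 - \<xi>) * (1 - cnj \<xi>)"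
      unfolding B_def seifert_block_def by (simp_all add: algebra_simps)
    then show ?thesis unfolding coeffs d_def t_def by simp
  qed
  have sign: "d k < 0 \<or> d k = 0 \<and> t k = 0" if "k < n" for k
  proof (cases "r = 0")
    case False
    have "(2 * r * of_int (a k)) * (2 * r * of_int (c k)) = 4 * r^2 * of_int (a k * c k)"
      by (simp add: power2_eq_square)
    also have "\<dots> \<le> 0" using ac[OF that] by (intro mult_nonneg_nonpos) (simp, simp del: of_int_mult)
    finally have "d k < 0" using False r unfolding d_def by linarith
    then show ?thesis by simp
  qed (simp add: d_def t_def)
  have "char_poly ((1 - \<xi>) \<cdot>\<^sub>m map_mat of_int (genus_one_sum n a c) +
      (1 - cnj \<xi>) \<cdot>\<^sub>m map_mat of_int (transpose_mat (genus_one_sum n a c))) =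
      (\<Prod>k<n. [:complex_of_real (d k), - complex_of_real (t k), 1:])"
    unfolding tl_mat char_poly_block_diag2 quad ..
  then show ?thesis
    unfolding tl_signature_def by (rule signature_eq_0_if_char_poly_quadratics) (rule sign)
qed

section \<open>The form a^2 + b^2 + c^2 + 2 d^2 modulo primes\<close>

type_synonym vec4 = "int \<times> int \<times> int \<times> int"

fun qf :: "vec4 \<Rightarrow> int" where
  "qf (a, b, c, d) = a^2 + b^2 + c^2 + 2 * d^2"

fun pol :: "vec4 \<Rightarrow> vec4 \<Rightarrow> int" where
  "pol (a, b, c, d) (a', b', c', d') = a * a' + b * b' + c * c' + 2 * d * d'"

fun scale4 :: "int \<Rightarrow> vec4 \<Rightarrow> vec4" where
  "scale4 t (a, b, c, d) = (t * a, t * b, t * c, t * d)"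

fun mod4 :: "int \<Rightarrow> vec4 \<Rightarrow> vec4" where
  "mod4 n (a, b, c, d) = (a mod n, b mod n, c mod n, d mod n)"

definition box4 :: "int \<Rightarrow> vec4 set" where
  "box4 n = {0..<n} \<times> {0..<n} \<times> {0..<n} \<times> {0..<n}"

definition qf_isotropic :: "int \<Rightarrow> vec4 set \<Rightarrow> bool" where
  "qf_isotropic n T \<longleftrightarrow> (\<forall>v\<in>T. \<forall>w\<in>T. n dvd qf v \<and> n dvd qf (v + w))"

lemma qf_add: "qf (v + w) = qf v + qf w + 2 * pol v w"
  by (cases v; cases w) (simp add: power2_eq_square algebra_simps)

lemma pol_self: "pol v v = qf v"
  by (cases v) (simp add: power2_eq_square)

lemma pol_lincomb:
  "pol (scale4 a v + scale4 b w) (scale4 a' v + scale4 b' w) =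
     a * a' * qf v + (a * b' + b * a') * pol v w + b * b' * qf w"
  by (cases v; cases w) (simp add: power2_eq_square algebra_simps)

lemma mod4_eq_0_iff: "mod4 n (a, b, c, d) = 0 \<longleftrightarrow> n dvd a \<and> n dvd b \<and> n dvd c \<and> n dvd d"
  by (simp add: zero_prod_def dvd_eq_mod_eq_0)

lemma mod4_eq_iff: "mod4 n v = mod4 n w \<longleftrightarrow> mod4 n (v - w) = 0"
  by (cases v; cases w) (simp add: zero_prod_def mod_eq_dvd_iff dvd_eq_mod_eq_0)

lemma mod4_add: "mod4 n (mod4 n v + mod4 n w) = mod4 n (v + w)"
  by (cases v; cases w) (simp add: mod_simps)

lemma mod4_scale4_mod: "mod4 n (scale4 (t mod n) v) = mod4 n (scale4 t v)"
  by (cases v) (simp add: mod_simps)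

lemma mod4_in_box4: "n > 0 \<Longrightarrow> mod4 n v \<in> box4 n"
  by (cases v) (simp add: box4_def)

lemma mod4_box4: "v \<in> box4 n \<Longrightarrow> mod4 n v = v"
  by (cases v) (simp add: box4_def)

lemma finite_box4: "finite (box4 n)"
  by (simp add: box4_def)

lemma qf_mod4: "[qf (mod4 n v) = qf v] (mod n)"
proof -
  obtain a b c d where v: "v = (a, b, c, d)" by (cases v)
  have m: "[x mod n = x] (mod n)" for x :: int by (simp add: cong_def)
  show ?thesis unfolding v mod4.simps qf.simps by (intro cong_add cong_mult cong_pow cong_refl m)
qed

lemma mod4_mult_eq:
  assumes "coprime m n" "mod4 m v = mod4 m w" "mod4 n v = mod4 n w"
  shows "mod4 (m * n) v = mod4 (m * n) w"
proof -
  have crt: "x mod (m * n) = y mod (m * n)" if "x mod m = y mod m" "x mod n = y mod n" for x y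
    using coprime_cong_mult[of x y m n] that assms(1) by (simp add: cong_def)
  obtain a b c d where v: "v = (a, b, c, d)" by (cases v)
  obtain a' b' c' d' where w: "w = (a', b', c', d')" by (cases w)
  from assms(2,3) show ?thesis
    unfolding v w by (simp add: crt[of a a'] crt[of b b'] crt[of c c'] crt[of d d'])
qed

lemma qf_isotropic_mod4:
  assumes "q dvd n" "qf_isotropic n T"
  shows "qf_isotropic q (mod4 q ` T)"
  unfolding qf_isotropic_def
proof (intro ballI conjI)
  fix v' w' assume "v' \<in> mod4 q ` T" "w' \<in> mod4 q ` T"
  then obtain v w where vw: "v \<in> T" "w \<in> T" "v' = mod4 q v" "w' = mod4 q w" by blast
  have "q dvd qf v" "q dvd qf (v + w)"
    using assms vw(1,2) unfolding qf_isotropic_def by (meson dvd_trans)+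
  moreover have "[qf v' = qf v] (mod q)" "[qf (v' + w') = qf (v + w)] (mod q)"
    using qf_mod4[of q "v' + w'"] qf_mod4[of q v] qf_mod4[of q "v + w"]
    unfolding vw(3,4) mod4_add by (auto intro: cong_trans cong_sym)
  ultimately show "q dvd qf v'" "q dvd qf (v' + w')"
    by (simp_all add: cong_dvd_iff)
qed

lemma anisotropic_of_nonresidue:
  fixes p :: int
  assumes "prime p" and nonres: "\<And>x. \<not> p dvd x^2 + 2" and dvd: "p dvd a^2 + 2 * b^2"
  shows "p dvd a \<and> p dvd b"
proof (cases "p dvd b")
  case True
  have "a^2 = (a^2 + 2 * b^2) - 2 * b^2" by simp
  also have "p dvd \<dots>" using dvd True by (intro dvd_diff) (simp_all add: power2_eq_square)
  finally show ?thesis using True \<open>prime p\<close> prime_dvd_power by blast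
next
  case False
  then have "coprime b p" using \<open>prime p\<close> by (metis coprime_commute prime_imp_coprime)
  then obtain i where "[b * i = 1] (mod p)" using cong_solve_coprime_int by blast
  then have i: "p dvd b * i - 1" by (simp add: cong_iff_dvd_diff)
  have "(a * i)^2 + 2 = i^2 * (a^2 + 2 * b^2) - 2 * (b * i - 1) * (b * i + 1)"
    by (simp add: power2_eq_square algebra_simps)
  also have "p dvd \<dots>" by (rule dvd_diff) (simp add: dvd, rule dvd_mult2[OF dvd_mult[OF i]])
  finally show ?thesis using nonres[of "a * i"] by blast
qed

lemma diff_scale4: "scale4 s v - scale4 r w = scale4 s v + scale4 (- r) w"
  by (cases v; cases w) simp

lemma qf_split:
  "qf (a, b, c, d) = (a + k * b) * (a - k * b) + (k^2 + 1) * b^2 + (c^2 + 2 * d^2)"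
  by (simp add: power2_eq_square algebra_simps)

lemma pol_split:
  "2 * pol (a, b, c, d) (a', b', c', d') =
     (a + k * b) * (a' - k * b') + (a - k * b) * (a' + k * b')
     + 2 * (k^2 + 1) * b * b' + 2 * (c * c' + 2 * d * d')"
  by (simp add: power2_eq_square algebra_simps)

lemma dependent_if_cross_null:
  fixes p :: int
  assumes "prime p" and null: "mod4 p (scale4 s v - scale4 r w) = 0" and "\<not> p dvd r"
  shows "\<exists>t. mod4 p w = mod4 p (scale4 t v)"
proof -
  have "coprime r p" using assms(1,3) by (metis coprime_commute prime_imp_coprime)
  then obtain i where "[r * i = 1] (mod p)" using cong_solve_coprime_int by blast
  then have i: "p dvd i * r - 1" by (simp add: cong_iff_dvd_diff mult.commute)
  obtain a b c d where v: "v = (a, b, c, d)" by (cases v)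
  obtain a' b' c' d' where w: "w = (a', b', c', d')" by (cases w)
  have "p dvd x' - i * s * x" if "p dvd s * x - r * x'" for x x'
  proof -
    have "x' - i * s * x = - (i * (s * x - r * x')) - (i * r - 1) * x'"
      by (simp add: algebra_simps)
    also have "p dvd \<dots>"
      by (rule dvd_diff[OF dvd_minus_iff[THEN iffD2, OF dvd_mult[OF that]] dvd_mult2[OF i]])
    finally show ?thesis .
  qed
  with null have "mod4 p (w - scale4 (i * s) v) = 0"
    unfolding v w by (simp only: diff_Pair scale4.simps mod4_eq_0_iff)
  then show ?thesis unfolding mod4_eq_iff by blast
qed

text \<open>Modulo p, with k^2 = -1, the form qf is (a + k b)(a - k b) + (c^2 + 2 d^2): a hyperbolic
  plane plus an anisotropic plane, so its totally isotropic subspaces are lines.\<close>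

locale split_qf =
  fixes p k :: int
  assumes prime: "prime p" and odd: "odd p" and sqrt_minus_one: "p dvd k^2 + 1"
    and nonresidue: "\<And>x. \<not> p dvd x^2 + 2"
begin

lemma dvd_2_mult_iff: "p dvd 2 * x \<longleftrightarrow> p dvd x"
proof -
  have "\<not> p dvd 2"
    using odd primes_dvd_imp_eq[OF prime, of 2] by auto
  then show ?thesis using prime by (simp add: prime_dvd_mult_iff)
qed

lemma dvd_k_mult_iff: "p dvd k * x \<longleftrightarrow> p dvd x"
proof -
  have "\<not> p dvd k"
  proof
    assume "p dvd k"
    then have "p dvd 1" using sqrt_minus_one by (simp add: power2_eq_square dvd_add_right_iff)
    then show False using prime by (simp add: prime_int_iff)
  qed
  then show ?thesis using prime by (simp add: prime_dvd_mult_iff)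
qed

lemma tail_dvd_if_isotropic:
  assumes "p dvd qf (a, b, c, d)" "p dvd (a + k * b) * (a - k * b)"
  shows "p dvd c \<and> p dvd d"
proof -
  have "c^2 + 2 * d^2 = qf (a, b, c, d) - (a + k * b) * (a - k * b) - (k^2 + 1) * b^2"
    unfolding qf_split[of a b c d k] by simp
  also have "p dvd \<dots>" using assms sqrt_minus_one by (intro dvd_diff) simp_all
  finally show ?thesis using anisotropic_of_nonresidue[OF prime nonresidue] by blast
qed

lemma mod4_eq_0_if_null:
  assumes "p dvd a + k * b" "p dvd a - k * b" "p dvd c" "p dvd d"
  shows "mod4 p (a, b, c, d) = 0"
proof -
  have "p dvd 2 * a" using dvd_add[OF assms(1,2)] by simp
  moreover have "p dvd k * (2 * b)" using dvd_diff[OF assms(1,2)] by (simp add: algebra_simps)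
  ultimately show ?thesis
    unfolding mod4_eq_0_iff using assms(3,4) by (simp add: dvd_2_mult_iff dvd_k_mult_iff)
qed

text \<open>Applied below with y = a + k b, z = a - k b, u = y(w) v - y(v) w and u' = z(w) v - z(v) w:
  then y(u) = z(u') = 0, and the polar form gives 2 pol u u' = - D^2 mod p for
  D = y(v) z(w) - z(v) y(w).\<close>

lemma isotropic_null_pair:
  assumes "p dvd qf u" "p dvd qf u'" "p dvd pol u u'"
    and u: "u = (u1, u2, u3, u4)" and u': "u' = (u1', u2', u3', u4')"
    and y: "u1 + k * u2 = 0" "u1 - k * u2 = - D" and z: "u1' + k * u2' = D" "u1' - k * u2' = 0"
  shows "mod4 p u = 0" "mod4 p u' = 0"
proof -
  have qu: "p dvd qf (u1, u2, u3, u4)" "p dvd qf (u1', u2', u3', u4')"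
    and pu: "p dvd 2 * pol (u1, u2, u3, u4) (u1', u2', u3', u4')"
    using assms(1-3) unfolding u u' by (simp_all only: dvd_mult)
  have tails: "p dvd u3 \<and> p dvd u4" "p dvd u3' \<and> p dvd u4'"
    by (rule tail_dvd_if_isotropic[OF qu(1)], simp add: y(1))
      (rule tail_dvd_if_isotropic[OF qu(2)], simp add: z(2))
  have "2 * pol (u1, u2, u3, u4) (u1', u2', u3', u4') =
          - (D * D) + 2 * (k^2 + 1) * u2 * u2' + 2 * (u3 * u3' + 2 * u4 * u4')"
    using pol_split[of u1 u2 u3 u4 u1' u2' u3' u4' k] unfolding y z by simp
  then have "- (D * D) = 2 * pol (u1, u2, u3, u4) (u1', u2', u3', u4')
          - 2 * (k^2 + 1) * u2 * u2' - 2 * (u3 * u3' + 2 * u4 * u4')"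
    by linarith
  also have "p dvd \<dots>"
  proof (intro dvd_diff pu)
    show "p dvd 2 * (k^2 + 1) * u2 * u2'"
      using sqrt_minus_one by (intro dvd_mult2 dvd_mult)
    show "p dvd 2 * (u3 * u3' + 2 * u4 * u4')"
      using tails by (metis dvd_add dvd_mult dvd_mult2)
  qed
  finally have "p dvd D * D" by simp
  then have "p dvd D" using prime prime_dvd_mult_iff by blast
  then show "mod4 p u = 0" "mod4 p u' = 0"
    unfolding u u' using tails by (intro mod4_eq_0_if_null; simp add: y z)+
qed

lemma isotropic_cross_null:
  assumes "p dvd qf v" "p dvd qf w" "p dvd pol v w"
    and v: "v = (a, b, c, d)" and w: "w = (a', b', c', d')"
  shows "mod4 p (scale4 (a' + k * b') v - scale4 (a + k * b) w) = 0"
    "mod4 p (scale4 (a' - k * b') v - scale4 (a - k * b) w) = 0"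
proof -
  have iso: "p dvd pol (scale4 s v + scale4 (- r) w) (scale4 s' v + scale4 (- r') w)" for s r s' r'
    unfolding pol_lincomb using assms(1-3) by simp
  define u where "u = scale4 (a' + k * b') v - scale4 (a + k * b) w"
  define u' where "u' = scale4 (a' - k * b') v - scale4 (a - k * b) w"
  define u1 u2 u3 u4 where "u1 = (a' + k * b') * a - (a + k * b) * a'"
    and "u2 = (a' + k * b') * b - (a + k * b) * b'"
    and "u3 = (a' + k * b') * c - (a + k * b) * c'"
    and "u4 = (a' + k * b') * d - (a + k * b) * d'"
  define u1' u2' u3' u4' where "u1' = (a' - k * b') * a - (a - k * b) * a'"
    and "u2' = (a' - k * b') * b - (a - k * b) * b'"
    and "u3' = (a' - k * b') * c - (a - k * b) * c'"
    and "u4' = (a' - k * b') * d - (a - k * b) * d'"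
  define D where "D = (a + k * b) * (a' - k * b') - (a - k * b) * (a' + k * b')"
  have "u = (u1, u2, u3, u4)" "u' = (u1', u2', u3', u4')"
    unfolding u_def u'_def v w u1_def u2_def u3_def u4_def u1'_def u2'_def u3'_def u4'_def
    by simp_all
  moreover have "u1 + k * u2 = 0" "u1 - k * u2 = - D" "u1' + k * u2' = D" "u1' - k * u2' = 0"
    unfolding u1_def u2_def u1'_def u2'_def D_def by (simp_all add: algebra_simps)
  moreover have "p dvd qf u" "p dvd qf u'" "p dvd pol u u'"
    unfolding u_def u'_def diff_scale4 pol_self[symmetric] by (rule iso)+
  ultimately show "mod4 p (scale4 (a' + k * b') v - scale4 (a + k * b) w) = 0"
    "mod4 p (scale4 (a' - k * b') v - scale4 (a - k * b) w) = 0"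
    unfolding u_def[symmetric] u'_def[symmetric] by (blast intro: isotropic_null_pair)+
qed

lemma isotropic_pair_dependent:
  assumes "mod4 p v \<noteq> 0" "p dvd qf v" "p dvd qf w" "p dvd pol v w"
  shows "\<exists>t. mod4 p w = mod4 p (scale4 t v)"
proof -
  obtain a b c d where v: "v = (a, b, c, d)" by (cases v)
  obtain a' b' c' d' where w: "w = (a', b', c', d')" by (cases w)
  note null = isotropic_cross_null[OF assms(2-4) v w]
  consider "\<not> p dvd a + k * b" | "\<not> p dvd a - k * b" | "p dvd a + k * b" "p dvd a - k * b"
    by blast
  then show ?thesis
  proof cases
    case 1
    then show ?thesis using dependent_if_cross_null[OF prime null(1)] by blast
  next
    case 2
    then show ?thesis using dependent_if_cross_null[OF prime null(2)] by blast
  next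
    case 3
    have "p dvd c \<and> p dvd d"
      using assms(2)[unfolded v] dvd_mult2[OF 3(1)] by (rule tail_dvd_if_isotropic)
    then have "mod4 p v = 0" unfolding v using 3 by (intro mod4_eq_0_if_null) simp_all
    with assms(1) show ?thesis by contradiction
  qed
qed

lemma card_isotropic_le:
  assumes "T \<subseteq> box4 p" "qf_isotropic p T"
  shows "card T \<le> nat p"
proof (cases "T \<subseteq> {0}")
  case True
  then have "card T \<le> 1" using card_mono[of "{0}" T] by simp
  then show ?thesis using prime_gt_1_int[OF prime] by (auto simp: le_nat_iff)
next
  case False
  then obtain v where v: "v \<in> T" "v \<noteq> 0" by blast
  have "mod4 p v = v" using assms(1) v(1) by (blast intro: mod4_box4)
  with v(2) have v0: "mod4 p v \<noteq> 0" by simp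
  have "T \<subseteq> (\<lambda>t. mod4 p (scale4 t v)) ` {0..<p}"
  proof
    fix w assume w: "w \<in> T"
    have "p dvd qf v" "p dvd qf w" "p dvd qf (v + w)"
      using assms(2) v(1) w unfolding qf_isotropic_def by blast+
    then have "p dvd 2 * pol v w" unfolding qf_add by (simp add: dvd_add_right_iff)
    then obtain t where "mod4 p w = mod4 p (scale4 t v)"
      using isotropic_pair_dependent[OF v0 \<open>p dvd qf v\<close> \<open>p dvd qf w\<close>] dvd_2_mult_iff by blast
    moreover have "mod4 p w = w" using assms(1) w by (blast intro: mod4_box4)
    ultimately have "w = mod4 p (scale4 (t mod p) v)" by (simp add: mod4_scale4_mod)
    moreover have "t mod p \<in> {0..<p}" using prime prime_gt_0_int by simp
    ultimately show "w \<in> (\<lambda>t. mod4 p (scale4 t v)) ` {0..<p}" by blast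
  qed
  then have "card T \<le> card ((\<lambda>t. mod4 p (scale4 t v)) ` {0..<p})"
    by (intro card_mono) simp_all
  also have "\<dots> \<le> card {0..<p}" by (rule card_image_le) simp
  finally show ?thesis by simp
qed

end

lemma card_isotropic_le_mult:
  assumes "split_qf p k" "split_qf q l" "p \<noteq> q"
    and T: "T \<subseteq> box4 (p * q)" "qf_isotropic (p * q) T"
  shows "card T \<le> nat (p * q)"
proof -
  have p: "prime p" "p > 0" and q: "prime q" "q > 0"
    using split_qf.prime[OF assms(1)] split_qf.prime[OF assms(2)] prime_gt_0_int by blast+
  have "coprime p q" using primes_coprime[OF p(1) q(1) assms(3)] .
  have "inj_on (\<lambda>v. (mod4 p v, mod4 q v)) T"
  proof (rule inj_onI)
    fix v w assume vw: "v \<in> T" "w \<in> T" "(mod4 p v, mod4 q v) = (mod4 p w, mod4 q w)"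
    have "mod4 (p * q) v = mod4 (p * q) w"
      by (rule mod4_mult_eq[OF \<open>coprime p q\<close>]) (use vw(3) in simp_all)
    moreover have "mod4 (p * q) v = v" "mod4 (p * q) w = w"
      using vw(1,2) T(1) by (blast intro: mod4_box4)+
    ultimately show "v = w" by simp
  qed
  then have "card T = card ((\<lambda>v. (mod4 p v, mod4 q v)) ` T)" by (simp add: card_image)
  also have "\<dots> \<le> card (mod4 p ` T \<times> mod4 q ` T)"
  proof (rule card_mono)
    have "mod4 p ` T \<subseteq> box4 p" "mod4 q ` T \<subseteq> box4 q"
      using p(2) q(2) by (auto intro!: image_subsetI mod4_in_box4 simp del: mod4.simps)
    then show "finite (mod4 p ` T \<times> mod4 q ` T)"
      using finite_box4 finite_subset by blast
  qed blast
  also have "\<dots> = card (mod4 p ` T) * card (mod4 q ` T)" by (simp add: card_cartesian_product)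
  also have "\<dots> \<le> nat p * nat q"
  proof (intro mult_mono)
    show "card (mod4 p ` T) \<le> nat p"
      by (rule split_qf.card_isotropic_le[OF assms(1)])
        (use mod4_in_box4 p in auto, rule qf_isotropic_mod4[OF _ T(2)], simp)
    show "card (mod4 q ` T) \<le> nat q"
      by (rule split_qf.card_isotropic_le[OF assms(2)])
        (use mod4_in_box4 q in auto, rule qf_isotropic_mod4[OF _ T(2)], simp)
  qed simp_all
  finally show ?thesis using p q by (simp add: nat_mult_distrib)
qed

lemma not_dvd_sq_plus_2_of_residues:
  fixes p :: int
  assumes "p > 0" "\<forall>r\<in>{0..<p}. \<not> p dvd r^2 + 2"
  shows "\<not> p dvd x^2 + 2"
proof -
  have "[(x mod p)^2 + 2 = x^2 + 2] (mod p)"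
    by (intro cong_add cong_pow cong_refl) (simp add: cong_def)
  moreover have "x mod p \<in> {0..<p}" using assms(1) by simp
  ultimately show ?thesis using assms(2) cong_dvd_iff by blast
qed

lemma split_qf_5_2: "split_qf 5 2"
proof
  have "{0..<5::int} = set [0..4]" by auto
  then show "\<not> 5 dvd x^2 + 2" for x :: int
    by (intro not_dvd_sq_plus_2_of_residues) (simp_all add: upto.simps)
qed simp_all

lemma split_qf_13_5: "split_qf 13 5"
proof
  have "{0..<13::int} = set [0..12]" by auto
  then show "\<not> 13 dvd x^2 + 2" for x :: int
    by (intro not_dvd_sq_plus_2_of_residues) (simp_all add: upto.simps)
qed simp_all

corollary card_isotropic_le_65:
  assumes "T \<subseteq> box4 65" "qf_isotropic 65 T"
  shows "card T \<le> 65"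
  using card_isotropic_le_mult[OF split_qf_5_2 split_qf_13_5, of T] assms by simp

section \<open>First homology and linking form in coordinates\<close>

lemma adj_mat_eq_if_mult_eq:
  fixes A C :: "'a :: idom mat"
  assumes A: "A \<in> carrier_mat n n" and C: "C \<in> carrier_mat n n"
    and AC: "A * C = det A \<cdot>\<^sub>m 1\<^sub>m n" and "det A \<noteq> 0"
  shows "adj_mat A = C"
proof -
  have adj: "adj_mat A \<in> carrier_mat n n" "adj_mat A * A = det A \<cdot>\<^sub>m 1\<^sub>m n"
    using adj_mat[OF A] by auto
  have "det A \<cdot>\<^sub>m adj_mat A = adj_mat A * (det A \<cdot>\<^sub>m 1\<^sub>m n)"
    using mult_smult_distrib[OF adj(1) one_carrier_mat, of "det A"] adj(1) by simp
  also have "\<dots> = (adj_mat A * A) * C" unfolding AC[symmetric] using adj(1) A C by simp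
  also have "\<dots> = det A \<cdot>\<^sub>m C"
    unfolding adj(2) using mult_smult_assoc_mat[of "1\<^sub>m n" n n C n "det A"] C by simp
  finally have e: "det A \<cdot>\<^sub>m adj_mat A = det A \<cdot>\<^sub>m C" .
  show ?thesis
  proof (rule eq_matI)
    fix i j assume "i < dim_row C" "j < dim_col C"
    then have "det A * adj_mat A $$ (i, j) = det A * C $$ (i, j)"
      using arg_cong[OF e, of "\<lambda>M. M $$ (i, j)"] adj(1) C by simp
    then show "adj_mat A $$ (i, j) = C $$ (i, j)" using \<open>det A \<noteq> 0\<close> by simp
  qed (use adj(1) C in auto)
qed

lemma frac_of_int_div_eq_0_iff:
  assumes "m \<noteq> 0"
  shows "frac (of_int n / of_int m :: rat) = 0 \<longleftrightarrow> m dvd n"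
proof
  assume "frac (of_int n / of_int m :: rat) = 0"
  then obtain l where "(of_int n / of_int m :: rat) = of_int l"
    by (auto simp: frac_eq_0_iff elim: Ints_cases)
  then have "n = m * l" using assms by (simp add: field_simps flip: of_int_mult of_int_eq_iff)
  then show "m dvd n" by simp
next
  assume "m dvd n"
  then obtain l where "n = m * l" by auto
  then show "frac (of_int n / of_int m :: rat) = 0" using assms by (simp add: frac_eq_0_iff)
qed

locale hrel_classifier =
  fixes V :: "int mat" and \<phi> :: "int vec \<Rightarrow> 'b"
  assumes hrel_iff: "x \<in> carrier_vec (dim_row V) \<Longrightarrow> y \<in> carrier_vec (dim_row V) \<Longrightarrow>
    (x, y) \<in> hrel V \<longleftrightarrow> \<phi> x = \<phi> y"
begin

lemma hrel_mem: "(x, y) \<in> hrel V \<longleftrightarrow>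
    x \<in> carrier_vec (dim_row V) \<and> y \<in> carrier_vec (dim_row V) \<and> \<phi> x = \<phi> y"
  using hrel_iff[of x y] unfolding hrel_def by blast

lemma equiv_hrel: "equiv (carrier_vec (dim_row V)) (hrel V)"
  by (rule equivI) (auto simp: refl_on_def sym_def trans_def hrel_mem)

lemma carrier_H1: "carrier (H1 V) = carrier_vec (dim_row V) // hrel V"
  by (simp add: H1_def)

lemma H1_class_mem:
  assumes "X \<in> carrier (H1 V)" "x \<in> X"
  shows "x \<in> carrier_vec (dim_row V)" "X = hrel V `` {x}"
proof -
  obtain a where a: "a \<in> carrier_vec (dim_row V)" "X = hrel V `` {a}"
    using assms(1) unfolding carrier_H1 quotient_def by auto
  then have "(a, x) \<in> hrel V" using assms(2) by auto
  then show "x \<in> carrier_vec (dim_row V)" "X = hrel V `` {x}"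
    using a(2) equiv_class_eq[OF equiv_hrel] by (auto simp: hrel_mem)
qed

lemma H1_class_in: "x \<in> carrier_vec (dim_row V) \<Longrightarrow> hrel V `` {x} \<in> carrier (H1 V)"
  unfolding carrier_H1 by (rule quotientI)

lemma H1_class_self: "x \<in> carrier_vec (dim_row V) \<Longrightarrow> x \<in> hrel V `` {x}"
  by (simp add: hrel_mem)

lemma H1_class_rep:
  assumes "X \<in> carrier (H1 V)"
  shows "(SOME x. x \<in> X) \<in> X"
proof -
  obtain a where "a \<in> carrier_vec (dim_row V)" "X = hrel V `` {a}"
    using assms unfolding carrier_H1 quotient_def by auto
  then have "a \<in> X" using H1_class_self by simp
  then show ?thesis by (rule someI)
qed

definition class_coords :: "int vec set \<Rightarrow> 'b" where
  "class_coords X = \<phi> (SOME x. x \<in> X)"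

lemma class_coords_eq:
  assumes "X \<in> carrier (H1 V)" "x \<in> X"
  shows "class_coords X = \<phi> x"
proof -
  have "(SOME x. x \<in> X) \<in> X" using H1_class_rep[OF assms(1)] .
  then have "(x, SOME x. x \<in> X) \<in> hrel V" using H1_class_mem[OF assms] by simp
  then show ?thesis unfolding class_coords_def hrel_mem by simp
qed

lemma inj_on_class_coords: "inj_on class_coords (carrier (H1 V))"
proof (rule inj_onI)
  fix X Y assume X: "X \<in> carrier (H1 V)" and Y: "Y \<in> carrier (H1 V)"
    and eq: "class_coords X = class_coords Y"
  define x y where "x = (SOME x. x \<in> X)" and "y = (SOME y. y \<in> Y)"
  have x: "x \<in> X" and y: "y \<in> Y" using H1_class_rep X Y unfolding x_def y_def by blast+
  have "(x, y) \<in> hrel V"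
    using eq class_coords_eq[OF X x] class_coords_eq[OF Y y] H1_class_mem[OF X x] H1_class_mem[OF Y y]
    by (simp add: hrel_mem)
  then show "X = Y"
    using H1_class_mem(2)[OF X x] H1_class_mem(2)[OF Y y] equiv_class_eq[OF equiv_hrel] by simp
qed

lemma class_coords_mult:
  assumes hom: "\<And>x y. x \<in> carrier_vec (dim_row V) \<Longrightarrow> y \<in> carrier_vec (dim_row V) \<Longrightarrow>
      \<phi> (x + y) = f (\<phi> x) (\<phi> y)"
    and X: "X \<in> carrier (H1 V)" and Y: "Y \<in> carrier (H1 V)"
    and XY: "X \<otimes>\<^bsub>H1 V\<^esub> Y \<in> carrier (H1 V)"
  shows "class_coords (X \<otimes>\<^bsub>H1 V\<^esub> Y) = f (class_coords X) (class_coords Y)"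
proof -
  define x y where "x = (SOME x. x \<in> X)" and "y = (SOME y. y \<in> Y)"
  have x: "x \<in> X" and y: "y \<in> Y" using H1_class_rep X Y unfolding x_def y_def by blast+
  have "x + y \<in> X \<otimes>\<^bsub>H1 V\<^esub> Y" using x y unfolding H1_def by auto
  then have "class_coords (X \<otimes>\<^bsub>H1 V\<^esub> Y) = \<phi> (x + y)" by (rule class_coords_eq[OF XY])
  also have "\<dots> = f (class_coords X) (class_coords Y)"
    using hom H1_class_mem(1)[OF X x] H1_class_mem(1)[OF Y y]
      class_coords_eq[OF X x] class_coords_eq[OF Y y] by simp
  finally show ?thesis .
qed

end

definition K_a :: "nat \<Rightarrow> int" where "K_a k = (if k = 3 then 8 else 16)"
definition K_c :: "nat \<Rightarrow> int" where "K_c k = (if k = 3 then -2 else -1)"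

definition knot_K :: "int mat" where "knot_K = genus_one_sum 4 K_a K_c"

lemma seifert_matrix_K: "seifert_matrix knot_K"
  unfolding knot_K_def by (rule seifert_matrix_genus_one_sum)

lemma K_a_K_c: "K_a k * K_c k = -16"
  by (simp add: K_a_def K_c_def)

lemma knot_K_carrier: "knot_K \<in> carrier_mat 8 8"
  using genus_one_sum_carrier[of 4 K_a K_c] unfolding knot_K_def by simp

lemma dim_row_knot_K [simp]: "dim_row knot_K = 8"
  using knot_K_carrier by blast

lemma det_sym_K: "det (sym_mat knot_K) = 65^4"
proof -
  have "det (sym_mat knot_K) = (\<Prod>k<4. 4 * (K_a k * K_c k) - 1)"
    unfolding knot_K_def det_sym_genus_one_sum by (simp add: mult.assoc)
  also have "\<dots> = (\<Prod>k<(4::nat). - 65)" unfolding K_a_K_c by simp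
  finally show ?thesis by simp
qed

lemma knot_det_K: "knot_det knot_K = 65^4"
  unfolding knot_det_def det_sym_K by simp

lemma alexander_poly_K: "alexander_poly knot_K = [:-16, 33, -16:] ^ 4"
proof -
  have "alexander_poly knot_K = (\<Prod>k<4. [:K_a k * K_c k, 1 - 2 * (K_a k * K_c k), K_a k * K_c k:])"
    unfolding knot_K_def alexander_poly_genus_one_sum by (simp add: mult.assoc)
  then show ?thesis by (simp add: K_a_K_c)
qed

lemma alexander_is_norm_K: "alexander_is_norm knot_K"
proof -
  have "reflect_poly [:-16, 33, -16:] = ([:-16, 33, -16:] :: int poly)"
    by (simp add: reflect_poly_def)
  then have "monom 1 0 * alexander_poly knot_K =
      monom 1 0 * [:-16, 33, -16:] ^ 2 * reflect_poly ([:-16, 33, -16:] ^ 2)"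
    unfolding alexander_poly_K by (simp add: reflect_poly_power)
  then show ?thesis unfolding alexander_is_norm_def by blast
qed

lemma tl_signature_K: "cmod \<xi> = 1 \<Longrightarrow> tl_signature knot_K \<xi> = 0"
  unfolding knot_K_def by (rule tl_signature_genus_one_sum) (simp_all add: K_a_K_c)

lemma divisors_K: "d dvd knot_det knot_K \<Longrightarrow> d mod 4 \<noteq> 3"
proof -
  assume "d dvd knot_det knot_K"
  then have "d dvd 5^4 * 13^4" unfolding knot_det_K by simp
  then obtain b c where bc: "d = b * c" "b dvd 5^4" "c dvd 13^4" using division_decomp by blast
  obtain i where b: "b = 5^i" using bc(2) divides_primepow_nat[of 5 b 4] by auto
  obtain j where c: "c = 13^j" using bc(3) divides_primepow_nat[of 13 c 4] by auto
  have "(5::nat)^i mod 4 = (5 mod 4)^i mod 4" "(13::nat)^j mod 4 = (13 mod 4)^j mod 4"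
    by (rule power_mod[symmetric])+
  then have "d mod 4 = 1" unfolding bc(1) b c by (simp add: mod_mult_eq[symmetric])
  then show "d mod 4 \<noteq> 3" by simp
qed

lemma sum_upt_8: "(\<Sum>j\<in>{0..<8::nat}. f j) = f 0 + f 1 + f 2 + f 3 + f 4 + f 5 + f 6 + f 7"
  by (simp add: atLeast0LessThan lessThan_nat_numeral add_ac)

lemma less_8_cases:
  "(i::nat) < 8 \<Longrightarrow> i = 0 \<or> i = 1 \<or> i = 2 \<or> i = 3 \<or> i = 4 \<or> i = 5 \<or> i = 6 \<or> i = 7"
  by auto

definition K_sym_entry :: "nat \<Rightarrow> nat \<Rightarrow> int" where
  "K_sym_entry = block_diag2 (\<lambda>k i j.
     seifert_block (K_a k) (K_c k) i j + seifert_block (K_a k) (K_c k) j i)"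

lemma dim_sym_mat_K [simp]: "dim_row (sym_mat knot_K) = 8" "dim_col (sym_mat knot_K) = 8"
  using knot_K_carrier by (simp_all add: sym_mat_def)

lemma sym_mat_K_mult_vec:
  assumes z: "z \<in> carrier_vec 8"
  shows "sym_mat knot_K *\<^sub>v z = vec 8 (\<lambda>i. [32 * z$0 + z$1, z$0 - 2 * z$1, 32 * z$2 + z$3,
    z$2 - 2 * z$3, 32 * z$4 + z$5, z$4 - 2 * z$5, 16 * z$6 + z$7, z$6 - 4 * z$7] ! i)"
proof (rule eq_vecI)
  fix i assume "i < dim_vec (vec 8 (\<lambda>i. [32 * z$0 + z$1, z$0 - 2 * z$1, 32 * z$2 + z$3,
    z$2 - 2 * z$3, 32 * z$4 + z$5, z$4 - 2 * z$5, 16 * z$6 + z$7, z$6 - 4 * z$7] ! i))"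
  then have i: "i < 8" by simp
  have "(sym_mat knot_K *\<^sub>v z) $ i = (\<Sum>j\<in>{0..<8}. K_sym_entry i j * z $ j)"
    using i z unfolding knot_K_def sym_mat_genus_one_sum K_sym_entry_def
    by (simp add: scalar_prod_def)
  then show "(sym_mat knot_K *\<^sub>v z) $ i = vec 8 (\<lambda>i. [32 * z$0 + z$1, z$0 - 2 * z$1, 32 * z$2 + z$3,
    z$2 - 2 * z$3, 32 * z$4 + z$5, z$4 - 2 * z$5, 16 * z$6 + z$7, z$6 - 4 * z$7] ! i) $ i"
    using less_8_cases[OF i]
    by (elim disjE) (simp_all add: sum_upt_8 K_sym_entry_def block_diag2_def seifert_block_def
      K_a_def K_c_def)
qed simp

text \<open>The blocks of V + V^T are [[32, 1], [1, -2]] and [[16, 1], [1, -4]]; the functionals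
  u - 32 v and u - 16 v kill their columns modulo 65.\<close>

definition h1_coords :: "int vec \<Rightarrow> vec4" where
  "h1_coords x = (x$0 - 32 * x$1, x$2 - 32 * x$3, x$4 - 32 * x$5, x$6 - 16 * x$7)"

lemma h1_coords_add:
  "x \<in> carrier_vec 8 \<Longrightarrow> y \<in> carrier_vec 8 \<Longrightarrow> h1_coords (x + y) = h1_coords x + h1_coords y"
  by (simp add: h1_coords_def algebra_simps)

lemma h1_coords_diff:
  "x \<in> carrier_vec 8 \<Longrightarrow> y \<in> carrier_vec 8 \<Longrightarrow> h1_coords (x - y) = h1_coords x - h1_coords y"
  by (simp add: h1_coords_def algebra_simps)

lemma h1_coords_sym_mat_K:
  assumes "z \<in> carrier_vec 8"
  shows "h1_coords (sym_mat knot_K *\<^sub>v z) = (65 * z$1, 65 * z$3, 65 * z$5, 65 * z$7)"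
  unfolding h1_coords_def sym_mat_K_mult_vec[OF assms] by simp

lemma hrel_K_iff:
  assumes x: "x \<in> carrier_vec 8" and y: "y \<in> carrier_vec 8"
  shows "(x, y) \<in> hrel knot_K \<longleftrightarrow> mod4 65 (h1_coords x) = mod4 65 (h1_coords y)"
proof
  assume "(x, y) \<in> hrel knot_K"
  then obtain z where z: "z \<in> carrier_vec 8" and "x - y = sym_mat knot_K *\<^sub>v z"
    unfolding hrel_def by auto
  then have "h1_coords x - h1_coords y = (65 * z$1, 65 * z$3, 65 * z$5, 65 * z$7)"
    using h1_coords_sym_mat_K h1_coords_diff[OF x y] by simp
  then show "mod4 65 (h1_coords x) = mod4 65 (h1_coords y)"
    unfolding mod4_eq_iff by (simp add: zero_prod_def)
next
  assume "mod4 65 (h1_coords x) = mod4 65 (h1_coords y)"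
  then have "mod4 65 (h1_coords (x - y)) = 0"
    unfolding mod4_eq_iff h1_coords_diff[OF x y] .
  then obtain m0 m1 m2 m3 where m: "h1_coords (x - y) = (65 * m0, 65 * m1, 65 * m2, 65 * m3)"
    unfolding h1_coords_def mod4_eq_0_iff by (auto elim!: dvdE)
  define d where "d = x - y"
  have dc: "d \<in> carrier_vec 8" unfolding d_def using x y by simp
  define z where "z = vec 8 (\<lambda>i. if i = 0 then d$1 + 2*m0 else if i = 1 then m0
      else if i = 2 then d$3 + 2*m1 else if i = 3 then m1
      else if i = 4 then d$5 + 2*m2 else if i = 5 then m2
      else if i = 6 then d$7 + 4*m3 else m3)"
  have zc: "z \<in> carrier_vec 8" unfolding z_def by simp
  have p: "d$0 - 32*d$1 = 65*m0" "d$2 - 32*d$3 = 65*m1" "d$4 - 32*d$5 = 65*m2" "d$6 - 16*d$7 = 65*m3"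
    using m unfolding d_def h1_coords_def by simp_all
  have "d = sym_mat knot_K *\<^sub>v z"
  proof (rule eq_vecI)
    show "dim_vec d = dim_vec (sym_mat knot_K *\<^sub>v z)" using dc by simp
    fix i assume "i < dim_vec (sym_mat knot_K *\<^sub>v z)"
    then have "i < 8" by simp
    then show "d $ i = (sym_mat knot_K *\<^sub>v z) $ i"
      unfolding sym_mat_K_mult_vec[OF zc] using p less_8_cases[OF \<open>i < 8\<close>]
      by (elim disjE) (simp_all add: z_def)
  qed
  then show "(x, y) \<in> hrel knot_K" unfolding hrel_def using x y zc d_def by auto
qed

interpretation K: hrel_classifier knot_K "\<lambda>x. mod4 65 (h1_coords x)"
  by unfold_locales (simp add: hrel_K_iff)

lemma class_coords_in_box4: "K.class_coords X \<in> box4 65"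
  unfolding K.class_coords_def by (rule mod4_in_box4) simp

lemma finite_H1_K: "finite (carrier (H1 knot_K))"
proof -
  have "K.class_coords ` carrier (H1 knot_K) \<subseteq> box4 65" using class_coords_in_box4 by auto
  then show ?thesis using finite_box4 finite_subset finite_imageD K.inj_on_class_coords by blast
qed

lemma class_coords_mult_K:
  assumes "X \<in> carrier (H1 knot_K)" "Y \<in> carrier (H1 knot_K)"
    "X \<otimes>\<^bsub>H1 knot_K\<^esub> Y \<in> carrier (H1 knot_K)"
  shows "K.class_coords (X \<otimes>\<^bsub>H1 knot_K\<^esub> Y) = mod4 65 (K.class_coords X + K.class_coords Y)"
  by (rule K.class_coords_mult[OF _ assms]) (simp add: h1_coords_add mod4_add)

text \<open>Every block of V + V^T has determinant -65, so its adjugate is -65^3 times the block sum of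
  the 2 x 2 adjugates.\<close>

definition K_adj :: "int mat" where
  "K_adj = mat 8 8 (\<lambda>(i, j). 274625 * block_diag2 (\<lambda>k i j.
     if i \<noteq> j then 1 else if i = 0 then - 2 * K_c k else - 2 * K_a k) i j)"

lemma K_adj_carrier: "K_adj \<in> carrier_mat 8 8"
  by (simp add: K_adj_def)

lemma sym_mat_K_mult_K_adj: "sym_mat knot_K * K_adj = det (sym_mat knot_K) \<cdot>\<^sub>m 1\<^sub>m 8"
proof (rule eq_matI)
  fix i j assume "i < dim_row (det (sym_mat knot_K) \<cdot>\<^sub>m 1\<^sub>m 8 :: int mat)"
    "j < dim_col (det (sym_mat knot_K) \<cdot>\<^sub>m 1\<^sub>m 8 :: int mat)"
  then have i: "i < 8" and j: "j < 8" by simp_all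
  have "(sym_mat knot_K * K_adj) $$ (i, j) = (sym_mat knot_K *\<^sub>v col K_adj j) $ i"
    using i j K_adj_carrier by simp
  also have "\<dots> = (det (sym_mat knot_K) \<cdot>\<^sub>m 1\<^sub>m 8 :: int mat) $$ (i, j)"
    unfolding sym_mat_K_mult_vec[OF col_carrier_vec[OF j K_adj_carrier]] det_sym_K
    using less_8_cases[OF i] less_8_cases[OF j] i j
    by (elim disjE) (simp_all add: K_adj_def block_diag2_def K_a_def K_c_def)
  finally show "(sym_mat knot_K * K_adj) $$ (i, j) =
      (det (sym_mat knot_K) \<cdot>\<^sub>m 1\<^sub>m 8 :: int mat) $$ (i, j)" .
qed (simp_all add: K_adj_def)

lemma adj_sym_mat_K: "adj_mat (sym_mat knot_K) = K_adj"
  by (rule adj_mat_eq_if_mult_eq[OF _ K_adj_carrier sym_mat_K_mult_K_adj])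
    (simp_all add: carrier_matI det_sym_K)

lemma K_adj_mult_vec:
  assumes x: "x \<in> carrier_vec 8"
  shows "K_adj *\<^sub>v x = vec 8 (\<lambda>i. 274625 * [2 * x$0 + x$1, x$0 - 32 * x$1, 2 * x$2 + x$3,
    x$2 - 32 * x$3, 2 * x$4 + x$5, x$4 - 32 * x$5, 4 * x$6 + x$7, x$6 - 16 * x$7] ! i)"
proof (rule eq_vecI)
  fix i assume "i < dim_vec (vec 8 (\<lambda>i. 274625 * [2 * x$0 + x$1, x$0 - 32 * x$1, 2 * x$2 + x$3,
    x$2 - 32 * x$3, 2 * x$4 + x$5, x$4 - 32 * x$5, 4 * x$6 + x$7, x$6 - 16 * x$7] ! i))"
  then have i: "i < 8" by simp
  have "(K_adj *\<^sub>v x) $ i = (\<Sum>j\<in>{0..<8}. 274625 * block_diag2 (\<lambda>k i j.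
      if i \<noteq> j then 1 else if i = 0 then - 2 * K_c k else - 2 * K_a k) i j * x $ j)"
    using i x unfolding K_adj_def by (simp add: scalar_prod_def)
  then show "(K_adj *\<^sub>v x) $ i = vec 8 (\<lambda>i. 274625 * [2 * x$0 + x$1, x$0 - 32 * x$1, 2 * x$2 + x$3,
    x$2 - 32 * x$3, 2 * x$4 + x$5, x$4 - 32 * x$5, 4 * x$6 + x$7, x$6 - 16 * x$7] ! i) $ i"
    using less_8_cases[OF i]
    by (elim disjE) (simp_all add: sum_upt_8 block_diag2_def K_a_def K_c_def algebra_simps)
qed (simp add: K_adj_def)

lemma self_linking_numerator_K:
  assumes "x \<in> carrier_vec 8"
  shows "scalar_prod x (adj_mat (sym_mat knot_K) *\<^sub>v x) = 274625 * (2 * qf (h1_coords x) + 65 *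
    ((2 * x$0 * x$1 - 32 * (x$1)^2) + (2 * x$2 * x$3 - 32 * (x$3)^2)
      + (2 * x$4 * x$5 - 32 * (x$5)^2) + (2 * x$6 * x$7 - 16 * (x$7)^2)))"
  using assms unfolding adj_sym_mat_K K_adj_mult_vec[OF assms] scalar_prod_def
  by (simp add: sum_upt_8 h1_coords_def power2_eq_square algebra_simps)

lemma lk_rep_K_self_eq_0_iff:
  assumes "x \<in> carrier_vec 8"
  shows "lk_rep knot_K x x = 0 \<longleftrightarrow> 65 dvd qf (h1_coords x)"
proof -
  define R where "R = (2 * x$0 * x$1 - 32 * (x$1)^2) + (2 * x$2 * x$3 - 32 * (x$3)^2)
      + (2 * x$4 * x$5 - 32 * (x$5)^2) + (2 * x$6 * x$7 - 16 * (x$7)^2)"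
  have "lk_rep knot_K x x = frac (of_int (274625 * (2 * qf (h1_coords x) + 65 * R)) / of_int (65^4))"
    unfolding lk_rep_def self_linking_numerator_K[OF assms] det_sym_K R_def ..
  also have "(of_int (274625 * (2 * qf (h1_coords x) + 65 * R)) / of_int (65^4) :: rat) =
      of_int (2 * qf (h1_coords x) + 65 * R) / of_int 65"
    by simp
  finally have "lk_rep knot_K x x = frac (of_int (2 * qf (h1_coords x) + 65 * R) / of_int 65)" .
  moreover have "frac (of_int (2 * qf (h1_coords x) + 65 * R) / of_int 65 :: rat) = 0 \<longleftrightarrow>
      65 dvd 2 * qf (h1_coords x) + 65 * R"
    by (rule frac_of_int_div_eq_0_iff) simp
  ultimately have "lk_rep knot_K x x = 0 \<longleftrightarrow> 65 dvd 2 * qf (h1_coords x) + 65 * R"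
    by (simp only:)
  also have "\<dots> \<longleftrightarrow> 65 dvd 2 * qf (h1_coords x)" by (rule dvd_add_left_iff) simp
  also have "\<dots> \<longleftrightarrow> 65 dvd qf (h1_coords x)" by (rule coprime_dvd_mult_right_iff) simp
  finally show ?thesis .
qed

lemma linking_form_K_self_eq_0_iff:
  assumes X: "X \<in> carrier (H1 knot_K)"
  shows "linking_form knot_K X X = 0 \<longleftrightarrow> 65 dvd qf (K.class_coords X)"
proof -
  define x where "x = (SOME x. x \<in> X)"
  have "x \<in> carrier_vec 8" using K.H1_class_mem(1)[OF X K.H1_class_rep[OF X]] unfolding x_def by simp
  then have "linking_form knot_K X X = 0 \<longleftrightarrow> 65 dvd qf (h1_coords x)"
    unfolding linking_form_def x_def[symmetric] by (rule lk_rep_K_self_eq_0_iff)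
  also have "\<dots> \<longleftrightarrow> 65 dvd qf (K.class_coords X)"
    unfolding K.class_coords_def x_def[symmetric] using qf_mod4 cong_dvd_iff by metis
  finally show ?thesis .
qed

lemma sqrt_knot_det_K: "sqrt (real (knot_det knot_K)) = 4225"
proof -
  have "real (knot_det knot_K) = 4225^2" unfolding knot_det_K by simp
  then show ?thesis by simp
qed

lemma no_metabolizer_K: "\<not> (\<exists>M. metabolizer knot_K M)"
proof
  assume "\<exists>M. metabolizer knot_K M"
  then obtain M where sg: "subgroup M (H1 knot_K)" and card: "card M = 4225"
    and perp: "M = {g \<in> carrier (H1 knot_K). \<forall>h \<in> M. linking_form knot_K g h = 0}"
    unfolding metabolizer_def sqrt_knot_det_K by auto
  have sub: "M \<subseteq> carrier (H1 knot_K)" using subgroup.subset[OF sg] .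
  have iso: "65 dvd qf (K.class_coords X)" if "X \<in> M" for X
    using that perp linking_form_K_self_eq_0_iff sub by blast
  have "qf_isotropic 65 (K.class_coords ` M)"
    unfolding qf_isotropic_def
  proof (intro ballI conjI)
    fix v w assume "v \<in> K.class_coords ` M" "w \<in> K.class_coords ` M"
    then obtain X Y where XY: "X \<in> M" "Y \<in> M" "v = K.class_coords X" "w = K.class_coords Y" by blast
    show "65 dvd qf v" using iso XY by simp
    have XYM: "X \<otimes>\<^bsub>H1 knot_K\<^esub> Y \<in> M" using subgroup.m_closed[OF sg XY(1,2)] .
    have "K.class_coords (X \<otimes>\<^bsub>H1 knot_K\<^esub> Y) = mod4 65 (v + w)"
      unfolding XY(3,4) by (rule class_coords_mult_K) (use sub XY(1,2) XYM in auto)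
    then have "65 dvd qf (mod4 65 (v + w))" using iso[OF XYM] by simp
    then show "65 dvd qf (v + w)" using qf_mod4 cong_dvd_iff by metis
  qed
  then have "card (K.class_coords ` M) \<le> 65"
    using card_isotropic_le_65 class_coords_in_box4 by blast
  moreover have "card (K.class_coords ` M) = card M"
    using card_image inj_on_subset[OF K.inj_on_class_coords sub] by blast
  ultimately show False using card by simp
qed

text \<open>Modulo 65, 33 = 1/2 and 61^2 = -1/4; hence q(33 (1 - N), 61 (1 + N), p, q) = 0 mod 65
  for N = p^2 + 2 q^2.\<close>

definition cone_vec :: "int \<Rightarrow> int \<Rightarrow> int vec" where
  "cone_vec p q = vec 8 (\<lambda>k.
     if k = 0 then 33 * (1 - (p^2 + 2 * q^2)) else if k = 2 then 61 * (1 + (p^2 + 2 * q^2))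
     else if k = 4 then p else if k = 6 then q else 0)"

lemma cone_vec_carrier: "cone_vec p q \<in> carrier_vec 8"
  by (simp add: cone_vec_def)

lemma H1_class_in_K: "x \<in> carrier_vec 8 \<Longrightarrow> hrel knot_K `` {x} \<in> carrier (H1 knot_K)"
  by (rule K.H1_class_in) simp

lemma class_coords_class_K:
  assumes "x \<in> carrier_vec 8"
  shows "K.class_coords (hrel knot_K `` {x}) = mod4 65 (h1_coords x)"
proof -
  have "x \<in> carrier_vec (dim_row knot_K)" using assms by simp
  then show ?thesis using K.class_coords_eq[OF K.H1_class_in K.H1_class_self] by blast
qed

lemma class_coords_cone:
  "K.class_coords (hrel knot_K `` {cone_vec p q}) =
    mod4 65 (33 * (1 - (p^2 + 2 * q^2)), 61 * (1 + (p^2 + 2 * q^2)), p, q)"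
  unfolding class_coords_class_K[OF cone_vec_carrier] by (simp add: h1_coords_def cone_vec_def)

lemma cone_class_isotropic:
  "hrel knot_K `` {cone_vec p q} \<in> isotropic_cone knot_K"
proof -
  define N where "N = p^2 + 2 * q^2"
  have "qf (33 * (1 - N), 61 * (1 + N), p, q) =
      1089 * (1 - N)^2 + 3721 * (1 + N)^2 + (p^2 + 2 * q^2)"
    by (simp add: power2_eq_square algebra_simps)
  also have "\<dots> = 65 * (74 + 81 * N + 74 * N^2)"
    unfolding N_def[symmetric] by (simp add: power2_eq_square algebra_simps)
  finally have "65 dvd qf (mod4 65 (33 * (1 - N), 61 * (1 + N), p, q))"
    using qf_mod4 cong_dvd_iff by (metis dvd_triv_left)
  then have "65 dvd qf (K.class_coords (hrel knot_K `` {cone_vec p q}))"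
    unfolding class_coords_cone N_def .
  then show ?thesis
    unfolding isotropic_cone_def
    using linking_form_K_self_eq_0_iff H1_class_in_K[OF cone_vec_carrier] by blast
qed

lemma zero_class_isotropic: "hrel knot_K `` {0\<^sub>v 8} \<in> isotropic_cone knot_K"
proof -
  have "K.class_coords (hrel knot_K `` {0\<^sub>v 8}) = 0"
    unfolding class_coords_class_K[OF zero_carrier_vec] by (simp add: h1_coords_def zero_prod_def)
  then show ?thesis
    unfolding isotropic_cone_def using linking_form_K_self_eq_0_iff H1_class_in_K
    by (simp add: zero_prod_def)
qed

lemma inj_on_cone_class: "inj_on (\<lambda>(p, q). hrel knot_K `` {cone_vec p q}) ({0..<65} \<times> {0..<65})"
proof (rule inj_onI)
  fix i j assume "i \<in> {0..<65} \<times> {0..<65}" "j \<in> {0..<65} \<times> {0..<65}"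
    and eq: "(\<lambda>(p, q). hrel knot_K `` {cone_vec p q}) i = (\<lambda>(p, q). hrel knot_K `` {cone_vec p q}) j"
  then obtain p q p' q' where ij: "i = (p, q)" "j = (p', q')"
    and range: "p \<in> {0..<65}" "q \<in> {0..<65}" "p' \<in> {0..<65}" "q' \<in> {0..<65}" by auto
  from eq[unfolded ij] have "K.class_coords (hrel knot_K `` {cone_vec p q}) =
      K.class_coords (hrel knot_K `` {cone_vec p' q'})" by simp
  then have "p mod 65 = p' mod 65 \<and> q mod 65 = q' mod 65"
    unfolding class_coords_cone mod4.simps prod.inject by blast
  with range show "i = j" unfolding ij by simp
qed

lemma zero_class_not_cone:
  assumes "p \<in> {0..<65}" "q \<in> {0..<65}"
  shows "hrel knot_K `` {0\<^sub>v 8} \<noteq> hrel knot_K `` {cone_vec p q}"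
proof
  assume "hrel knot_K `` {0\<^sub>v 8} = hrel knot_K `` {cone_vec p q}"
  then have "mod4 65 (h1_coords (0\<^sub>v 8)) = mod4 65 (h1_coords (cone_vec p q))"
    using class_coords_class_K[OF cone_vec_carrier] class_coords_class_K[of "0\<^sub>v 8"] by simp
  then show False using assms by (clarsimp simp: h1_coords_def cone_vec_def)
qed

lemma isotropic_cone_K_large: "real (card (isotropic_cone knot_K)) > sqrt (real (knot_det knot_K))"
proof -
  let ?Z = "hrel knot_K `` {0\<^sub>v 8}"
  let ?cone = "(\<lambda>(p, q). hrel knot_K `` {cone_vec p q}) ` ({0..<65} \<times> {0..<65})"
  have "?Z \<notin> ?cone"
  proof
    assume "?Z \<in> ?cone"
    then obtain p q where "p \<in> {0..<65}" "q \<in> {0..<65}" "?Z = hrel knot_K `` {cone_vec p q}"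
      by auto
    then show False using zero_class_not_cone by blast
  qed
  then have "card (insert ?Z ?cone) = Suc (65 * 65)"
    using card_image[OF inj_on_cone_class] by (simp add: card_cartesian_product)
  moreover have "card (insert ?Z ?cone) \<le> card (isotropic_cone knot_K)"
  proof (rule card_mono)
    show "finite (isotropic_cone knot_K)"
      using finite_H1_K unfolding isotropic_cone_def by simp
    show "insert ?Z ?cone \<subseteq> isotropic_cone knot_K"
      using zero_class_isotropic cone_class_isotropic by auto
  qed
  ultimately show ?thesis unfolding sqrt_knot_det_K by simp
qed

theorem mainTheorem2:
  shows "\<exists>V :: int mat. seifert_matrix V \<and>
     (\<forall>d :: nat. d dvd knot_det V \<longrightarrow> d mod 4 \<noteq> 3) \<and>
     alexander_is_norm V \<and>
     (\<forall>\<xi> :: complex. cmod \<xi> = 1 \<longrightarrow> tl_signature V \<xi> = 0) \<and>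
     real (card (isotropic_cone V)) > sqrt (real (knot_det V)) \<and>
     \<not> (\<exists>M. metabolizer V M)"
proof (intro exI[of _ knot_K] conjI allI impI)
  show "seifert_matrix knot_K" by (rule seifert_matrix_K)
  show "d mod 4 \<noteq> 3" if "d dvd knot_det knot_K" for d using that by (rule divisors_K)
  show "alexander_is_norm knot_K" by (rule alexander_is_norm_K)
  show "tl_signature knot_K \<xi> = 0" if "cmod \<xi> = 1" for \<xi> using that by (rule tl_signature_K)
  show "real (card (isotropic_cone knot_K)) > sqrt (real (knot_det knot_K))"
    by (rule isotropic_cone_K_large)
  show "\<not> (\<exists>M. metabolizer knot_K M)" by (rule no_metabolizer_K)
qed

end
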